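(* Let $V$ be a real vector space of finite even dimension $n$ with a quadratic form $Q$ of anti-Lorentz signature $(1,n-1)$, and let $\rho$ be a $c$-compatible irreducible representation of $\mathbb{C}l(V)$ on a finite-dimensional complex vector space $K$ with nondegenerate hermitian form $(\cdot,\cdot)$. Let $K=K_L\oplus K_R$ where $K_L$ (resp. $K_R$) is the $-1$ (resp. $+1$) eigenspace of the chirality operator $\chi$. Let $w\in V$ be a nonzero spacelike vector and $(\psi,\phi)_w:=(\psi,\rho(w)\phi)$. Then $K_L$ and $K_R$ are orthogonal to each other for $(\cdot,\cdot)_w$, and if $n>2$, the restriction of $(\cdot,\cdot)_w$ to each of $K_L$ and $K_R$ is neutral.
   Context: $Cl(V,Q)$ is the real Clifford algebra with $v^2=+Q(v)$, $\mathbb{C}l(V)$ its complexification with complex conjugation $c$, $T$ the linear antiautomorphism restricting to the identity on $V$, $a^\times=c(T(a))$. $\rho$ is $c$-compatible if $(\rho(a)\psi,\phi)=(\psi,\rho(a^\times)\phi)$. In the anti-Lorentzian setting a vector $v$ is timelike if $Q(v)>0$ and spacelike if $Q(v)<0$. The chirality operator is $\chi=(-i)^{n/2+q}\rho(\omega)$ with $q=n-1$ and $\omega=e_1\cdots e_n$ the volume element of a pseudo-orthonormal basis of $V$. A hermitian form is neutral if its positive and negative indices of inertia are equal. *)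

theory Defs
  imports "HOL-Analysis.Analysis"
begin

text \<open>The spinor space K is modelled as complex^'m (finite-dimensional, nonzero). A representation rho of the complexified
Clifford algebra is determined (universal property) by a real-linear map
gamma = rho restricted to V with gamma(v)^2 = Q(v) id.\<close>

definition herm :: "complex^'m^'m \<Rightarrow> complex^'m \<Rightarrow> complex^'m \<Rightarrow> complex" where
  "herm H \<psi> \<phi> = (\<Sum>i\<in>UNIV. cnj (\<psi>$i) * (H *v \<phi>)$i)"

definition hermitian_form :: "complex^'m^'m \<Rightarrow> bool" where
  "hermitian_form H \<longleftrightarrow> (\<forall>\<psi> \<phi>. herm H \<psi> \<phi> = cnj (herm H \<phi> \<psi>))"

definition nondegenerate_form :: "complex^'m^'m \<Rightarrow> bool" where
  "nondegenerate_form H \<longleftrightarrow> (\<forall>\<psi>. (\<forall>\<phi>. herm H \<psi> \<phi> = 0) \<longrightarrow> \<psi> = 0)"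

definition csubspace :: "(complex^'m) set \<Rightarrow> bool" where
  "csubspace S \<longleftrightarrow> 0 \<in> S \<and> (\<forall>x\<in>S. \<forall>y\<in>S. x + y \<in> S) \<and> (\<forall>(c::complex) x. x \<in> S \<longrightarrow> c *s x \<in> S)"

definition cindep :: "nat \<Rightarrow> (nat \<Rightarrow> complex^'m) \<Rightarrow> bool" where
  "cindep k f \<longleftrightarrow> (\<forall>c::nat \<Rightarrow> complex. (\<Sum>i<k. c i *s f i) = 0 \<longrightarrow> (\<forall>i<k. c i = 0))"

definition cdim :: "(complex^'m) set \<Rightarrow> nat" where
  "cdim S = Max {k. \<exists>f. (\<forall>i<k. f i \<in> S) \<and> cindep k f}"

definition pos_index :: "(complex^'m \<Rightarrow> complex^'m \<Rightarrow> complex) \<Rightarrow> (complex^'m) set \<Rightarrow> nat" where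
  "pos_index b W = Max {cdim U | U. csubspace U \<and> U \<subseteq> W \<and> (\<forall>x\<in>U. x \<noteq> 0 \<longrightarrow> Re (b x x) > 0)}"

definition neg_index :: "(complex^'m \<Rightarrow> complex^'m \<Rightarrow> complex) \<Rightarrow> (complex^'m) set \<Rightarrow> nat" where
  "neg_index b W = Max {cdim U | U. csubspace U \<and> U \<subseteq> W \<and> (\<forall>x\<in>U. x \<noteq> 0 \<longrightarrow> Re (b x x) < 0)}"

definition neutral_on :: "(complex^'m \<Rightarrow> complex^'m \<Rightarrow> complex) \<Rightarrow> (complex^'m) set \<Rightarrow> bool" where
  "neutral_on b W \<longleftrightarrow> pos_index b W = neg_index b W"

definition cl_mon :: "('v \<Rightarrow> complex^'m^'m) \<Rightarrow> 'v list \<Rightarrow> complex^'m^'m" where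
  "cl_mon \<gamma> vs = foldr (\<lambda>v A. \<gamma> v ** A) vs (mat 1)"

text \<open>Clifford representation: real-linear, with gamma(v)^2 = Q(v) (sign convention v^2 = +Q(v)).\<close>
definition clifford_rep :: "('v::real_vector \<Rightarrow> real) \<Rightarrow> ('v \<Rightarrow> complex^'m^'m) \<Rightarrow> bool" where
  "clifford_rep Q \<gamma> \<longleftrightarrow> linear \<gamma> \<and> (\<forall>v. \<gamma> v ** \<gamma> v = mat (complex_of_real (Q v)))"

definition irreducible_rep :: "('v \<Rightarrow> complex^'m^'m) \<Rightarrow> bool" where
  "irreducible_rep \<gamma> \<longleftrightarrow> (\<forall>S. csubspace S \<and> (\<forall>v. \<forall>x\<in>S. \<gamma> v *v x \<in> S) \<longrightarrow> S = {0} \<or> S = UNIV)"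

text \<open>c-compatibility (rho(a)psi,phi) = (psi, rho(a^x) phi) checked on all elements
c * v_1...v_k spanning Cl(V)_C, for which a^x = cnj(c) v_k ... v_1; by
(sesqui)additivity this is the condition on all of Cl(V)_C.\<close>
definition c_compatible :: "complex^'m^'m \<Rightarrow> ('v \<Rightarrow> complex^'m^'m) \<Rightarrow> bool" where
  "c_compatible H \<gamma> \<longleftrightarrow> (\<forall>(c::complex) vs \<psi> \<phi>.
      herm H ((mat c ** cl_mon \<gamma> vs) *v \<psi>) \<phi> = herm H \<psi> ((mat (cnj c) ** cl_mon \<gamma> (rev vs)) *v \<phi>))"

text \<open>Chirality operator chi = (-i)^(n/2+q) rho(e_1...e_n), q = n-1.\<close>
definition chirality :: "nat \<Rightarrow> (nat \<Rightarrow> 'v) \<Rightarrow> ('v \<Rightarrow> complex^'m^'m) \<Rightarrow> complex^'m^'m" where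
  "chirality n e \<gamma> = mat ((- \<i>) ^ (n div 2 + (n - 1))) ** cl_mon \<gamma> (map e [0..<n])"

end

theory Submission
  imports Defs
begin

text \<open>Since n is even, the volume element \<open>\<omega> = e\<^sub>1\<cdots>e\<^sub>n\<close> anticommutes with every \<open>e\<^sub>i\<close>,
hence with every \<open>\<rho>(v)\<close>, and so does \<open>\<chi>\<close>. By c-compatibility the adjoint of \<open>\<rho>(\<omega>)\<close> is
\<open>\<rho>\<close> of the reversed monomial, which is \<open>(-1)\<^bsup>n(n-1)/2\<^esup>\<rho>(\<omega>)\<close>; together with the phase
\<open>(-i)\<^bsup>n/2+n-1\<^esup>\<close> this makes \<open>\<chi>\<close> skew-adjoint, so each eigenspace of \<open>\<chi>\<close> is isotropic.
As \<open>\<rho>(w)\<close> exchanges \<open>K\<^sub>L\<close> and \<open>K\<^sub>R\<close>, these are orthogonal for \<open>(\<cdot>,\<cdot>)\<^sub>w\<close>.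

For \<open>n > 2\<close> the negative definite part of V has dimension at least 2, so there is a spacelike
\<open>u \<perp> w\<close>. Then \<open>a = \<rho>(w)\<rho>(u)\<close> commutes with \<open>\<chi>\<close>, \<open>a\<^sup>2 = -Q(w)Q(u) < 0\<close>, and
\<open>(a\<psi>, a\<psi>)\<^sub>w = -Q(w)Q(u) (\<psi>,\<psi>)\<^sub>w\<close>: the invertible map \<open>a\<close> sends subspaces of an eigenspace on
which \<open>(\<cdot>,\<cdot>)\<^sub>w\<close> is positive definite to ones of equal dimension on which it is negative definite,
and vice versa.\<close>

lemma matrix_add_rdistrib: "((A::'a::semiring_1^'n^'m) + B) ** C = A ** C + B ** C"
  by (vector matrix_matrix_mult_def sum.distrib[symmetric] field_simps)

lemma matrix_mul_uminus_left: "(- (A::'a::ring_1^'n^'m)) ** B = - (A ** B)"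
  by (simp add: vec_eq_iff matrix_matrix_mult_def sum_negf)

lemma matrix_mul_uminus_right: "(A::'a::ring_1^'n^'m) ** (- B) = - (A ** B)"
  by (simp add: vec_eq_iff matrix_matrix_mult_def sum_negf)

lemma matrix_vector_mult_uminus_left: "(- (A::'a::ring_1^'n^'m)) *v x = - (A *v x)"
  by (simp add: vec_eq_iff matrix_vector_mult_def sum_negf)

lemma matrix_vector_mult_uminus_right: "(A::'a::ring_1^'n^'m) *v (- x) = - (A *v x)"
  by (simp add: vec_eq_iff matrix_vector_mult_def sum_negf)

lemma matrix_vector_mult_sum_scalar:
  "(a::complex^'n^'m) *v (\<Sum>i\<in>I. c i *s f i) = (\<Sum>i\<in>I. c i *s (a *v f i))"
  by (induction I rule: infinite_finite_induct) (simp_all add: matrix_vector_right_distrib vector_scalar_commute)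

lemma mat_matrix_vector_mult: "mat c *v x = c *s (x::'a::semiring_1^'n)"
  by (simp add: vec_eq_iff mat_def matrix_vector_mult_def if_distrib if_distribR cong: if_cong)

lemma mat_mult_matrix_vector_mult: "(mat c ** A) *v x = c *s (A *v (x::'a::semiring_1^'n))"
  by (simp add: matrix_vector_mul_assoc[symmetric] mat_matrix_vector_mult)

lemma mat_of_real: "mat (of_real r) = r *\<^sub>R (mat 1 :: 'a::real_algebra_1^'n^'n)"
  by (simp add: vec_eq_iff mat_def of_real_def)

lemma scaleR_matrix_vector_mult: "(r *\<^sub>R (A::'a::real_algebra_1^'n^'m)) *v x = r *\<^sub>R (A *v x)"
  by (simp add: vec_eq_iff matrix_vector_mult_def scaleR_sum_right)

lemma scaleR_conv_scalar_mult: "r *\<^sub>R x = complex_of_real r *s (x::complex^'n)"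
  by (simp add: vec_eq_iff of_real_def)

lemma herm_scalar_mult_left: "herm H (c *s \<psi>) \<phi> = cnj c * herm H \<psi> \<phi>"
  by (simp add: herm_def sum_distrib_left mult.assoc)

lemma herm_scalar_mult_right: "herm H \<psi> (c *s \<phi>) = c * herm H \<psi> \<phi>"
  by (simp add: herm_def sum_distrib_left vector_scalar_commute mult_ac)

lemma cl_mon_Nil [simp]: "cl_mon \<gamma> [] = mat 1"
  by (simp add: cl_mon_def)

lemma cl_mon_Cons [simp]: "cl_mon \<gamma> (v # vs) = \<gamma> v ** cl_mon \<gamma> vs"
  by (simp add: cl_mon_def)

lemma cl_mon_append: "cl_mon \<gamma> (xs @ ys) = cl_mon \<gamma> xs ** cl_mon \<gamma> ys"
  by (induction xs) (simp_all add: matrix_mul_assoc)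

lemma clifford_rep_square:
  assumes "clifford_rep Q \<gamma>"
  shows "\<gamma> v ** \<gamma> v = Q v *\<^sub>R mat 1"
  using assms by (simp add: clifford_rep_def mat_of_real)

lemma clifford_rep_anticommute:
  assumes rep: "clifford_rep Q \<gamma>" and bil: "bilinear B" and sym: "\<forall>x y. B x y = B y x"
    and Q_B: "\<forall>v. Q v = B v v" and orth: "B u v = 0"
  shows "\<gamma> u ** \<gamma> v = - (\<gamma> v ** \<gamma> u)"
proof -
  have "Q (u + v) = Q u + Q v"
    using orth sym Q_B by (simp add: bilinear_ladd[OF bil] bilinear_radd[OF bil])
  moreover have "\<gamma> (u + v) = \<gamma> u + \<gamma> v"
    using rep by (simp add: clifford_rep_def linear_add)
  ultimately have "(\<gamma> u + \<gamma> v) ** (\<gamma> u + \<gamma> v) = \<gamma> u ** \<gamma> u + \<gamma> v ** \<gamma> v"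
    using clifford_rep_square[OF rep, of "u + v"] by (simp add: clifford_rep_square[OF rep] scaleR_add_left)
  then have "\<gamma> u ** \<gamma> v + \<gamma> v ** \<gamma> u = 0"
    by (simp add: matrix_add_ldistrib matrix_add_rdistrib algebra_simps)
  then show ?thesis
    by (simp add: eq_neg_iff_add_eq_0)
qed

lemma cl_mon_anticommute:
  assumes "\<forall>v\<in>set vs. \<gamma> x ** \<gamma> v = - (\<gamma> v ** \<gamma> x)"
  shows "\<gamma> x ** cl_mon \<gamma> vs = (-1) ^ length vs *\<^sub>R (cl_mon \<gamma> vs ** \<gamma> x)"
  using assms
proof (induction vs)
  case Nil
  then show ?case by simp
next
  case (Cons v vs)
  have "\<gamma> x ** cl_mon \<gamma> (v # vs) = - (\<gamma> v ** (\<gamma> x ** cl_mon \<gamma> vs))"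
    using Cons.prems by (simp add: matrix_mul_assoc matrix_mul_uminus_left)
  also have "\<dots> = (-1) ^ length (v # vs) *\<^sub>R (cl_mon \<gamma> (v # vs) ** \<gamma> x)"
    using Cons by (simp add: matrix_scalar_ac scalar_matrix_assoc[symmetric] matrix_mul_assoc)
  finally show ?case .
qed

lemma cl_mon_rev:
  assumes "distinct vs" and "pairwise (\<lambda>a b. \<gamma> a ** \<gamma> b = - (\<gamma> b ** \<gamma> a)) (set vs)"
  shows "cl_mon \<gamma> (rev vs) = (-1) ^ (length vs choose 2) *\<^sub>R cl_mon \<gamma> vs"
  using assms
proof (induction vs rule: rev_induct)
  case Nil
  then show ?case by (simp add: numeral_2_eq_2)
next
  case (snoc v vs)
  then have IH: "cl_mon \<gamma> (rev vs) = (-1) ^ (length vs choose 2) *\<^sub>R cl_mon \<gamma> vs"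
    by (simp add: pairwise_insert)
  have "\<gamma> v ** cl_mon \<gamma> vs = (-1) ^ length vs *\<^sub>R (cl_mon \<gamma> vs ** \<gamma> v)"
    using snoc.prems by (intro cl_mon_anticommute) (auto simp: pairwise_insert)
  then have "cl_mon \<gamma> (rev (vs @ [v]))
      = ((-1) ^ (length vs choose 2) * (-1) ^ length vs) *\<^sub>R cl_mon \<gamma> (vs @ [v])"
    by (simp add: IH matrix_scalar_ac scalar_matrix_assoc[symmetric] cl_mon_append)
  moreover have "length (vs @ [v]) choose 2 = (length vs choose 2) + length vs"
    by (simp add: numeral_2_eq_2)
  ultimately show ?case
    by (simp only: power_add)
qed

section \<open>The chirality operator\<close>

lemma volume_element_anticommute_basis:
  assumes "even n" and "j < n"
    and anti: "\<And>i k. i < n \<Longrightarrow> k < n \<Longrightarrow> i \<noteq> k \<Longrightarrow> \<gamma> (e i) ** \<gamma> (e k) = - (\<gamma> (e k) ** \<gamma> (e i))"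
  shows "\<gamma> (e j) ** cl_mon \<gamma> (map e [0..<n]) = - (cl_mon \<gamma> (map e [0..<n]) ** \<gamma> (e j))"
proof -
  let ?A = "cl_mon \<gamma> (map e [0..<j])" and ?C = "cl_mon \<gamma> (map e [Suc j..<n])"
  have split: "cl_mon \<gamma> (map e [0..<n]) = ?A ** (\<gamma> (e j) ** ?C)"
  proof -
    have "[0..<n] = [0..<j] @ j # [Suc j..<n]"
      using upt_add_eq_append[of 0 j "n - j"] upt_conv_Cons[of j n] \<open>j < n\<close>
      by (metis le0 le_add_diff_inverse less_imp_le)
    then show ?thesis
      by (simp only: map_append list.map cl_mon_append cl_mon_Cons)
  qed
  have A: "\<gamma> (e j) ** ?A = (-1) ^ j *\<^sub>R (?A ** \<gamma> (e j))"
    by (subst cl_mon_anticommute) (use \<open>j < n\<close> in \<open>auto intro!: anti\<close>)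
  have C: "\<gamma> (e j) ** ?C = (-1) ^ (n - Suc j) *\<^sub>R (?C ** \<gamma> (e j))"
    by (subst cl_mon_anticommute) (use \<open>j < n\<close> in \<open>auto intro!: anti\<close>)
  have "odd (j + (n - Suc j))"
    using \<open>even n\<close> \<open>j < n\<close> by presburger
  then have sign: "(-1::real) ^ j * (-1) ^ (n - Suc j) = -1"
    by (simp add: power_add[symmetric])
  have "\<gamma> (e j) ** (?A ** (\<gamma> (e j) ** ?C)) = (\<gamma> (e j) ** ?A) ** (\<gamma> (e j) ** ?C)"
    by (simp only: matrix_mul_assoc)
  also have "\<dots> = ((-1) ^ j *\<^sub>R (?A ** \<gamma> (e j))) ** ((-1) ^ (n - Suc j) *\<^sub>R (?C ** \<gamma> (e j)))"
    by (simp only: A C)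
  also have "\<dots> = ((-1) ^ j * (-1) ^ (n - Suc j)) *\<^sub>R ((?A ** (\<gamma> (e j) ** ?C)) ** \<gamma> (e j))"
    by (simp only: matrix_scalar_ac scalar_matrix_assoc[symmetric] scaleR_scaleR matrix_mul_assoc
        mult.commute)
  finally show ?thesis
    by (simp only: split sign scaleR_minus1_left)
qed

lemma volume_element_anticommute:
  assumes "even n" and lin: "linear \<gamma>" and span: "span (e ` {..<n}) = UNIV"
    and anti: "\<And>i k. i < n \<Longrightarrow> k < n \<Longrightarrow> i \<noteq> k \<Longrightarrow> \<gamma> (e i) ** \<gamma> (e k) = - (\<gamma> (e k) ** \<gamma> (e i))"
  shows "\<gamma> x ** cl_mon \<gamma> (map e [0..<n]) = - (cl_mon \<gamma> (map e [0..<n]) ** \<gamma> x)"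
proof -
  let ?\<omega> = "cl_mon \<gamma> (map e [0..<n])"
  have anticommutator_linear: "linear (\<lambda>x. \<gamma> x ** ?\<omega> + ?\<omega> ** \<gamma> x)"
    by (rule linearI) (simp_all add: linear_add[OF lin] linear_scale[OF lin] matrix_add_ldistrib
        matrix_add_rdistrib scalar_matrix_assoc[symmetric] matrix_scalar_ac scaleR_add_right)
  have basis: "\<gamma> (e j) ** ?\<omega> + ?\<omega> ** \<gamma> (e j) = 0" if "j < n" for j
    using volume_element_anticommute_basis[where \<gamma>=\<gamma> and e=e, OF \<open>even n\<close> that anti] by simp
  have "\<gamma> x ** ?\<omega> + ?\<omega> ** \<gamma> x = 0"
    by (rule linear_eq_0_on_span[OF anticommutator_linear, of "e ` {..<n}"]) (auto simp: span basis)
  then show ?thesis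
    by (simp add: eq_neg_iff_add_eq_0)
qed

lemma chirality_anticommute:
  assumes "even n" and "linear \<gamma>" and "span (e ` {..<n}) = UNIV"
    and "\<And>i k. i < n \<Longrightarrow> k < n \<Longrightarrow> i \<noteq> k \<Longrightarrow> \<gamma> (e i) ** \<gamma> (e k) = - (\<gamma> (e k) ** \<gamma> (e i))"
  shows "chirality n e \<gamma> *v (\<gamma> x *v \<psi>) = - (\<gamma> x *v (chirality n e \<gamma> *v \<psi>))"
proof -
  let ?\<omega> = "cl_mon \<gamma> (map e [0..<n])"
  have "?\<omega> *v (\<gamma> x *v \<psi>) = - (\<gamma> x *v (?\<omega> *v \<psi>))"
    using volume_element_anticommute[OF assms, of x]
    by (simp add: matrix_vector_mul_assoc matrix_vector_mult_uminus_left)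
  then show ?thesis
    by (simp add: chirality_def mat_mult_matrix_vector_mult vector_scalar_commute vector_smult_rneg)
qed

lemma c_compatible_cl_mon:
  assumes "c_compatible H \<gamma>"
  shows "herm H (cl_mon \<gamma> vs *v \<psi>) \<phi> = herm H \<psi> (cl_mon \<gamma> (rev vs) *v \<phi>)"
  using assms[unfolded c_compatible_def, rule_format, of 1] by simp

lemma cnj_minus_i_power_mult_sign:
  assumes "odd (k + l)"
  shows "cnj ((- \<i>) ^ k) * (-1) ^ l = - ((- \<i>) ^ k)"
proof -
  have "cnj ((- \<i>) ^ k) = (-1) ^ k * (- \<i>) ^ k"
    by (metis complex_cnj_i complex_cnj_minus complex_cnj_power minus_minus power_minus)
  then have "cnj ((- \<i>) ^ k) * (-1) ^ l = (-1) ^ (k + l) * (- \<i>) ^ k"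
    by (simp add: power_add mult_ac)
  then show ?thesis
    using assms by simp
qed

lemma chirality_phase:
  assumes "even n" and "n \<noteq> 0"
  shows "cnj ((- \<i>) ^ (n div 2 + (n - 1))) * (-1) ^ (n choose 2) = - ((- \<i>) ^ (n div 2 + (n - 1)))"
proof (rule cnj_minus_i_power_mult_sign)
  obtain l where n: "n = 2 * Suc l"
    using assms by (metis evenE not0_implies_Suc mult_0_right)
  then have "n div 2 + (n - 1) + (n choose 2) = 2 * (l * l + 3 * l + 1) + 1"
    by (simp add: choose_two algebra_simps)
  then show "odd (n div 2 + (n - 1) + (n choose 2))"
    by simp
qed

lemma chirality_skew_adjoint:
  assumes "even n" and "n \<noteq> 0" and compat: "c_compatible H \<gamma>" and "inj_on e {..<n}"
    and anti: "\<And>i k. i < n \<Longrightarrow> k < n \<Longrightarrow> i \<noteq> k \<Longrightarrow> \<gamma> (e i) ** \<gamma> (e k) = - (\<gamma> (e k) ** \<gamma> (e i))"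
  shows "herm H (chirality n e \<gamma> *v \<psi>) \<phi> = - herm H \<psi> (chirality n e \<gamma> *v \<phi>)"
proof -
  let ?\<omega> = "cl_mon \<gamma> (map e [0..<n])" and ?c = "(- \<i>) ^ (n div 2 + (n - 1))"
  have "distinct (map e [0..<n])"
    using \<open>inj_on e {..<n}\<close> by (simp add: distinct_map lessThan_atLeast0)
  moreover have "pairwise (\<lambda>a b. \<gamma> a ** \<gamma> b = - (\<gamma> b ** \<gamma> a)) (set (map e [0..<n]))"
    by (auto simp: pairwise_def intro: anti)
  ultimately have rev: "cl_mon \<gamma> (rev (map e [0..<n])) = (-1) ^ (n choose 2) *\<^sub>R ?\<omega>"
    by (simp add: cl_mon_rev)
  have "herm H (chirality n e \<gamma> *v \<psi>) \<phi> = cnj ?c * herm H (?\<omega> *v \<psi>) \<phi>"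
    by (simp add: chirality_def mat_mult_matrix_vector_mult herm_scalar_mult_left)
  also have "\<dots> = (cnj ?c * (-1) ^ (n choose 2)) * herm H \<psi> (?\<omega> *v \<phi>)"
    by (simp add: c_compatible_cl_mon[OF compat] rev scaleR_matrix_vector_mult
        scaleR_conv_scalar_mult herm_scalar_mult_right)
  also have "\<dots> = - (?c * herm H \<psi> (?\<omega> *v \<phi>))"
    by (simp only: chirality_phase[OF \<open>even n\<close> \<open>n \<noteq> 0\<close>] mult_minus_left)
  also have "\<dots> = - herm H \<psi> (chirality n e \<gamma> *v \<phi>)"
    by (simp add: chirality_def mat_mult_matrix_vector_mult herm_scalar_mult_right)
  finally show ?thesis .
qed

lemma skew_adjoint_eigenvectors_orthogonal:
  assumes skew: "\<And>\<psi> \<phi>. herm H (A *v \<psi>) \<phi> = - herm H \<psi> (A *v \<phi>)"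
    and "A *v \<psi> = c *s \<psi>" and "A *v \<phi> = c *s \<phi>" and "c \<in> \<real>" and "c \<noteq> 0"
  shows "herm H \<psi> \<phi> = 0"
proof -
  have "c * herm H \<psi> \<phi> = - (c * herm H \<psi> \<phi>)"
    using skew[of \<psi> \<phi>] assms(2-4)
    by (simp add: herm_scalar_mult_left herm_scalar_mult_right Reals_cnj_iff)
  then show ?thesis
    using \<open>c \<noteq> 0\<close> by simp
qed

lemma skew_adjoint_opposite_eigenvectors_orthogonal:
  assumes skew: "\<And>\<psi> \<phi>. herm H (A *v \<psi>) \<phi> = - herm H \<psi> (A *v \<phi>)"
    and anti: "\<And>\<phi>. A *v (G *v \<phi>) = - (G *v (A *v \<phi>))"
    and "A *v \<psi> = c *s \<psi>" and "A *v \<phi> = - (c *s \<phi>)" and "c \<in> \<real>" and "c \<noteq> 0"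
  shows "herm H \<psi> (G *v \<phi>) = 0"
proof (rule skew_adjoint_eigenvectors_orthogonal[OF skew])
  show "A *v (G *v \<phi>) = c *s (G *v \<phi>)"
    by (simp add: anti \<open>A *v \<phi> = - (c *s \<phi>)\<close> matrix_vector_mult_uminus_right vector_scalar_commute)
qed (use assms in auto)

section \<open>Indices of inertia under an anti-isometry\<close>

definition positive_dims :: "(complex^'m \<Rightarrow> complex^'m \<Rightarrow> complex) \<Rightarrow> (complex^'m) set \<Rightarrow> nat set" where
  "positive_dims b W = {cdim U | U. csubspace U \<and> U \<subseteq> W \<and> (\<forall>x\<in>U. x \<noteq> 0 \<longrightarrow> Re (b x x) > 0)}"

lemma pos_index_eq_Max: "pos_index b W = Max (positive_dims b W)"
  by (simp add: pos_index_def positive_dims_def)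

lemma neg_index_eq_Max: "neg_index b W = Max (positive_dims (\<lambda>x y. - b x y) W)"
  by (simp add: neg_index_def positive_dims_def)

lemma csubspace_matrix_image:
  assumes "csubspace U"
  shows "csubspace ((*v) a ` U)"
  unfolding csubspace_def
proof (intro conjI ballI allI impI)
  show "0 \<in> (*v) a ` U"
    using assms by (force simp: csubspace_def)
next
  fix x y assume "x \<in> (*v) a ` U" "y \<in> (*v) a ` U"
  then show "x + y \<in> (*v) a ` U"
    using assms by (force simp: csubspace_def matrix_vector_right_distrib[symmetric])
next
  fix c x assume "x \<in> (*v) a ` U"
  then show "c *s x \<in> (*v) a ` U"
    using assms by (force simp: csubspace_def vector_scalar_commute[symmetric])
qed

lemma cindep_matrix_image_iff:
  assumes "inj ((*v) (a::complex^'m^'m))"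
  shows "cindep k (\<lambda>i. a *v f i) \<longleftrightarrow> cindep k f"
proof -
  have "a *v x = 0 \<longleftrightarrow> x = 0" for x
    using assms by (metis injD matrix_vector_mult_0_right)
  then show ?thesis
    by (simp add: cindep_def matrix_vector_mult_sum_scalar[symmetric])
qed

lemma cdim_matrix_image:
  assumes "inj ((*v) (a::complex^'m^'m))"
  shows "cdim ((*v) a ` U) = cdim U"
proof -
  have "(\<exists>g. (\<forall>i<k. g i \<in> (*v) a ` U) \<and> cindep k g) \<longleftrightarrow> (\<exists>f. (\<forall>i<k. f i \<in> U) \<and> cindep k f)" for k
  proof
    assume "\<exists>g. (\<forall>i<k. g i \<in> (*v) a ` U) \<and> cindep k g"
    then obtain g where g: "\<forall>i<k. \<exists>x\<in>U. g i = a *v x" "cindep k g"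
      by blast
    then obtain f where f: "\<forall>i<k. f i \<in> U \<and> g i = a *v f i"
      by metis
    then have "(\<Sum>i<k. c i *s g i) = (\<Sum>i<k. c i *s (a *v f i))" for c
      by (intro sum.cong) auto
    then have "cindep k (\<lambda>i. a *v f i)"
      using g(2) by (simp add: cindep_def)
    then show "\<exists>f. (\<forall>i<k. f i \<in> U) \<and> cindep k f"
      using f cindep_matrix_image_iff[OF assms] by blast
  next
    assume "\<exists>f. (\<forall>i<k. f i \<in> U) \<and> cindep k f"
    then obtain f where "\<forall>i<k. f i \<in> U" "cindep k f"
      by blast
    then show "\<exists>g. (\<forall>i<k. g i \<in> (*v) a ` U) \<and> cindep k g"
      using cindep_matrix_image_iff[OF assms] by (intro exI[of _ "\<lambda>i. a *v f i"]) auto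
  qed
  then show ?thesis
    by (simp add: cdim_def)
qed

lemma positive_dims_anti_isometry:
  assumes W: "(*v) a ` W \<subseteq> W" and inj: "inj ((*v) a)"
    and rescale: "\<And>x. b (a *v x) (a *v x) = of_real r * b x x" and "r < 0"
  shows "positive_dims b W \<subseteq> positive_dims (\<lambda>x y. - b x y) W"
proof
  fix d assume "d \<in> positive_dims b W"
  then obtain U where U: "d = cdim U" "csubspace U" "U \<subseteq> W" "\<forall>x\<in>U. x \<noteq> 0 \<longrightarrow> Re (b x x) > 0"
    by (auto simp: positive_dims_def)
  have "Re (- b y y) > 0" if y: "y \<in> (*v) a ` U" "y \<noteq> 0" for y
  proof -
    obtain x where "x \<in> U" "y = a *v x"
      using y(1) by blast
    moreover have "x \<noteq> 0"
      using y(2) \<open>y = a *v x\<close> by auto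
    ultimately show ?thesis
      using U(4) rescale[of x] \<open>r < 0\<close> by (simp add: mult_neg_pos)
  qed
  moreover have "(*v) a ` U \<subseteq> W"
    using U(3) W by blast
  ultimately show "d \<in> positive_dims (\<lambda>x y. - b x y) W"
    unfolding positive_dims_def
    by (intro CollectI exI[of _ "(*v) a ` U"])
      (simp add: U(1) cdim_matrix_image[OF inj] csubspace_matrix_image[OF U(2)])
qed

lemma neutral_on_anti_isometry:
  assumes "(*v) a ` W \<subseteq> W" and "inj ((*v) a)"
    and "\<And>x. b (a *v x) (a *v x) = of_real r * b x x" and "r < 0"
  shows "neutral_on b W"
proof -
  have "positive_dims b W \<subseteq> positive_dims (\<lambda>x y. - b x y) W"
    using assms by (rule positive_dims_anti_isometry)
  moreover have "positive_dims (\<lambda>x y. - b x y) W \<subseteq> positive_dims (\<lambda>x y. - (- b x y)) W"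
    using assms by (intro positive_dims_anti_isometry) auto
  ultimately show ?thesis
    by (simp add: neutral_on_def pos_index_eq_Max neg_index_eq_Max)
qed

section \<open>A spacelike vector orthogonal to w\<close>

lemma exists_orthogonal_negative:
  fixes B :: "'v::real_vector \<Rightarrow> 'v \<Rightarrow> real"
  assumes bil: "bilinear B" and "B x x < 0" and "B y y < 0" and "B x y = 0" and "B y x = 0"
  shows "\<exists>u. B u w = 0 \<and> B u u < 0"
proof (cases "B x w = 0")
  case True
  then show ?thesis
    using \<open>B x x < 0\<close> by blast
next
  case False
  let ?u = "B y w *\<^sub>R x - B x w *\<^sub>R y"
  have "B ?u w = 0"
    by (simp add: bilinear_lsub[OF bil] bilinear_lmul[OF bil])
  moreover have "B ?u ?u = (B y w)\<^sup>2 * B x x + (B x w)\<^sup>2 * B y y"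
    using assms(4,5)
    by (simp add: bilinear_lsub[OF bil] bilinear_rsub[OF bil] bilinear_lmul[OF bil]
        bilinear_rmul[OF bil] power2_eq_square)
  moreover have "(B y w)\<^sup>2 * B x x \<le> 0" and "(B x w)\<^sup>2 * B y y < 0"
    using assms(2,3) False by (simp_all add: mult_nonneg_nonpos mult_pos_neg)
  ultimately show ?thesis
    by (intro exI[of _ ?u]) simp
qed

lemma exists_two_negative_signs:
  fixes n :: nat and s :: "nat \<Rightarrow> real"
  assumes signature: "card {i. i < n \<and> s i = 1} = 1"
    and unit: "\<forall>i<n. s i = 1 \<or> s i = -1" and "2 < n"
  shows "\<exists>j k. j < n \<and> k < n \<and> j \<noteq> k \<and> s j = -1 \<and> s k = -1"
proof -
  obtain t where t: "{i. i < n \<and> s i = 1} = {t}"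
    using signature by (rule card_1_singletonE)
  have "\<exists>j k :: nat. j < 3 \<and> k < 3 \<and> j \<noteq> k \<and> j \<noteq> t \<and> k \<noteq> t"
    by presburger
  then obtain j k where "j < 3" "k < 3" "j \<noteq> k" "j \<noteq> t" "k \<noteq> t"
    by blast
  moreover have "j < n" "k < n"
    using \<open>j < 3\<close> \<open>k < 3\<close> \<open>2 < n\<close> by linarith+
  moreover have "s i = -1" if "i < n" "i \<noteq> t" for i
    using that t unit by auto
  ultimately show ?thesis
    by blast
qed

lemma exists_orthogonal_spacelike:
  fixes B :: "'v::real_vector \<Rightarrow> 'v \<Rightarrow> real" and n :: nat
  assumes bil: "bilinear B" and Q_B: "\<forall>v. Q v = B v v"
    and orth: "\<forall>i<n. \<forall>j<n. i \<noteq> j \<longrightarrow> B (e i) (e j) = 0"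
    and unit: "\<forall>i<n. Q (e i) = 1 \<or> Q (e i) = -1"
    and signature: "card {i. i < n \<and> Q (e i) = 1} = 1" and "2 < n"
  shows "\<exists>u. B u w = 0 \<and> Q u < 0"
proof -
  obtain j k where "j < n" "k < n" "j \<noteq> k" "Q (e j) = -1" "Q (e k) = -1"
    using exists_two_negative_signs[of n "\<lambda>i. Q (e i)", OF signature unit \<open>2 < n\<close>] by blast
  then show ?thesis
    using exists_orthogonal_negative[OF bil, of "e j" "e k" w] orth Q_B by auto
qed

section \<open>Neutrality of the eigenspaces\<close>

lemma clifford_pair_square:
  assumes rep: "clifford_rep Q \<gamma>" and anti: "\<gamma> u ** \<gamma> w = - (\<gamma> w ** \<gamma> u)"
  shows "(\<gamma> w ** \<gamma> u) ** (\<gamma> w ** \<gamma> u) = (- (Q w * Q u)) *\<^sub>R mat 1"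
proof -
  have "(\<gamma> w ** \<gamma> u) ** (\<gamma> w ** \<gamma> u) = \<gamma> w ** (\<gamma> u ** \<gamma> w) ** \<gamma> u"
    by (simp only: matrix_mul_assoc)
  also have "\<dots> = - ((\<gamma> w ** \<gamma> w) ** (\<gamma> u ** \<gamma> u))"
    by (simp only: anti matrix_mul_uminus_left matrix_mul_uminus_right matrix_mul_assoc)
  also have "\<dots> = (- (Q w * Q u)) *\<^sub>R mat 1"
    by (simp add: clifford_rep_square[OF rep] matrix_scalar_ac scalar_matrix_assoc[symmetric])
  finally show ?thesis .
qed

lemma clifford_pair_rescales_form:
  assumes rep: "clifford_rep Q \<gamma>" and compat: "c_compatible H \<gamma>"
    and anti: "\<gamma> u ** \<gamma> w = - (\<gamma> w ** \<gamma> u)"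
  shows "herm H ((\<gamma> w ** \<gamma> u) *v x) (\<gamma> w *v ((\<gamma> w ** \<gamma> u) *v x))
       = of_real (- (Q w * Q u)) * herm H x (\<gamma> w *v x)"
proof -
  have "(\<gamma> u ** \<gamma> w) ** (\<gamma> w ** (\<gamma> w ** \<gamma> u)) = Q w *\<^sub>R ((\<gamma> u ** \<gamma> w) ** \<gamma> u)"
    by (simp add: matrix_mul_assoc clifford_rep_square[OF rep] matrix_scalar_ac scalar_matrix_assoc[symmetric])
  also have "\<dots> = (- (Q w * Q u)) *\<^sub>R \<gamma> w"
    by (simp add: anti matrix_mul_uminus_left matrix_mul_assoc[symmetric] clifford_rep_square[OF rep] matrix_scalar_ac)
  finally have reversed: "(\<gamma> u ** \<gamma> w) ** (\<gamma> w ** (\<gamma> w ** \<gamma> u)) = (- (Q w * Q u)) *\<^sub>R \<gamma> w" .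
  have "\<gamma> w ** \<gamma> u = cl_mon \<gamma> [w, u]" and "\<gamma> u ** \<gamma> w = cl_mon \<gamma> (rev [w, u])"
    by simp_all
  then have "herm H ((\<gamma> w ** \<gamma> u) *v x) (\<gamma> w *v ((\<gamma> w ** \<gamma> u) *v x))
      = herm H x (((\<gamma> u ** \<gamma> w) ** (\<gamma> w ** (\<gamma> w ** \<gamma> u))) *v x)"
    by (simp only: c_compatible_cl_mon[OF compat] matrix_vector_mul_assoc)
  then show ?thesis
    by (simp only: reversed scaleR_matrix_vector_mult scaleR_conv_scalar_mult herm_scalar_mult_right)
qed

lemma neutral_on_eigenspace:
  assumes rep: "clifford_rep Q \<gamma>" and compat: "c_compatible H \<gamma>"
    and uw: "\<gamma> u ** \<gamma> w = - (\<gamma> w ** \<gamma> u)" and "Q u < 0" and "Q w < 0"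
    and anti: "\<And>x \<phi>. A *v (\<gamma> x *v \<phi>) = - (\<gamma> x *v (A *v \<phi>))"
  shows "neutral_on (\<lambda>\<psi> \<phi>. herm H \<psi> (\<gamma> w *v \<phi>)) {\<psi>. A *v \<psi> = c *s \<psi>}"
proof (rule neutral_on_anti_isometry)
  let ?a = "\<gamma> w ** \<gamma> u" and ?r = "- (Q w * Q u)"
  show "?r < 0"
    using \<open>Q u < 0\<close> \<open>Q w < 0\<close> by (simp add: mult_neg_neg)
  have "A *v (?a *v \<psi>) = ?a *v (A *v \<psi>)" for \<psi>
    by (simp add: matrix_vector_mul_assoc[symmetric] anti matrix_vector_mult_uminus_right)
  then show "(*v) ?a ` {\<psi>. A *v \<psi> = c *s \<psi>} \<subseteq> {\<psi>. A *v \<psi> = c *s \<psi>}"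
    by (auto simp: vector_scalar_commute)
  have "?a *v (?a *v \<psi>) = ?r *\<^sub>R \<psi>" for \<psi>
    using clifford_pair_square[OF rep uw]
    by (simp add: matrix_vector_mul_assoc scaleR_matrix_vector_mult matrix_vector_mult_uminus_left)
  then show "inj ((*v) ?a)"
    using \<open>?r < 0\<close> by (metis injI scaleR_cancel_left less_irrefl)
  show "herm H (?a *v \<psi>) (\<gamma> w *v (?a *v \<psi>)) = of_real ?r * herm H \<psi> (\<gamma> w *v \<psi>)" for \<psi>
    by (rule clifford_pair_rescales_form[OF rep compat uw])
qed

theorem lemma7:
  fixes n :: nat
    and B :: "'v::real_vector \<Rightarrow> 'v \<Rightarrow> real"
    and Q :: "'v \<Rightarrow> real"
    and e :: "nat \<Rightarrow> 'v"
    and \<gamma> :: "'v \<Rightarrow> complex^'m^'m"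
    and H :: "complex^'m^'m"
    and w :: 'v
  assumes even_n: "even n"
    and B_bil: "\<forall>x. linear (B x) \<and> linear (\<lambda>y. B y x)"
    and B_sym: "\<forall>x y. B x y = B y x"
    and Q_def: "\<forall>v. Q v = B v v"
    and e_basis: "inj_on e {..<n} \<and> independent (e ` {..<n}) \<and> span (e ` {..<n}) = UNIV"
    and e_orth: "\<forall>i<n. \<forall>j<n. i \<noteq> j \<longrightarrow> B (e i) (e j) = 0"
    and e_norm: "\<forall>i<n. Q (e i) = 1 \<or> Q (e i) = -1"
    and signature: "card {i. i < n \<and> Q (e i) = 1} = 1"
    and rep: "clifford_rep Q \<gamma>"
    and irr: "irreducible_rep \<gamma>"
    and herm_H: "hermitian_form H"
    and nondeg_H: "nondegenerate_form H"
    and compat: "c_compatible H \<gamma>"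
    and spacelike: "Q w < 0"
  shows "(let chi = chirality n e \<gamma>;
             KL = {\<psi>. chi *v \<psi> = - \<psi>};
             KR = {\<psi>. chi *v \<psi> = \<psi>};
             hw = (\<lambda>\<psi> \<phi>. herm H \<psi> (\<gamma> w *v \<phi>))
         in (\<forall>\<psi>\<in>KL. \<forall>\<phi>\<in>KR. hw \<psi> \<phi> = 0 \<and> hw \<phi> \<psi> = 0)
            \<and> (n > 2 \<longrightarrow> neutral_on hw KL \<and> neutral_on hw KR))"
proof -
  let ?\<chi> = "chirality n e \<gamma>" and ?hw = "\<lambda>\<psi> \<phi>. herm H \<psi> (\<gamma> w *v \<phi>)"
  have bil: "bilinear B"
    using B_bil by (simp add: bilinear_def)
  have anti: "\<gamma> u ** \<gamma> v = - (\<gamma> v ** \<gamma> u)" if "B u v = 0" for u v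
    using clifford_rep_anticommute[OF rep bil B_sym Q_def that] .
  have e_anti: "\<gamma> (e i) ** \<gamma> (e k) = - (\<gamma> (e k) ** \<gamma> (e i))" if "i < n" "k < n" "i \<noteq> k" for i k
    using anti e_orth that by blast
  have "n \<noteq> 0"
    using signature by (intro notI) simp
  have "linear \<gamma>"
    using rep by (simp add: clifford_rep_def)
  have "inj_on e {..<n}" and "span (e ` {..<n}) = UNIV"
    using e_basis by simp_all
  have \<chi>_anti: "?\<chi> *v (\<gamma> x *v \<psi>) = - (\<gamma> x *v (?\<chi> *v \<psi>))" for x \<psi>
    using chirality_anticommute[OF even_n \<open>linear \<gamma>\<close> \<open>span (e ` {..<n}) = UNIV\<close> e_anti] .
  have skew: "herm H (?\<chi> *v \<psi>) \<phi> = - herm H \<psi> (?\<chi> *v \<phi>)" for \<psi> \<phi>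
    using chirality_skew_adjoint[OF even_n \<open>n \<noteq> 0\<close> compat \<open>inj_on e {..<n}\<close> e_anti] .
  have orth: "?hw \<psi> \<phi> = 0 \<and> ?hw \<phi> \<psi> = 0" if "?\<chi> *v \<psi> = - \<psi>" and "?\<chi> *v \<phi> = \<phi>" for \<psi> \<phi>
    using that skew_adjoint_opposite_eigenvectors_orthogonal[OF skew \<chi>_anti, of \<psi> "-1" \<phi>]
      skew_adjoint_opposite_eigenvectors_orthogonal[OF skew \<chi>_anti, of \<phi> 1 \<psi>]
    by (simp add: vector_smult_lneg)
  have neutral: "neutral_on ?hw {\<psi>. ?\<chi> *v \<psi> = c *s \<psi>}" if "n > 2" for c
  proof -
    obtain u where "B u w = 0" "Q u < 0"
      using exists_orthogonal_spacelike[OF bil Q_def e_orth e_norm signature \<open>n > 2\<close>] by blast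
    then show ?thesis
      using neutral_on_eigenspace[OF rep compat anti \<open>Q u < 0\<close> spacelike \<chi>_anti] by simp
  qed
  show ?thesis
    using orth neutral[of "-1"] neutral[of 1] by (simp add: vector_smult_lneg)
qed

end
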